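(* Let $g(\cdot)$ be a (parameterized) feature encoder mapping sequences to $\mathbb{R}^d$ and let $T_1,\dots,T_K:\mathbb{R}^d\to\mathbb{R}^d$ be (parameterized) transformation networks, and consider the contextual discriminative contrastive loss $\mathcal{L}_{\text{cdcl}}=\mathcal{L}_{\text{cncl}}+\mathcal{L}_{\text{dcl}}$ defined in the context. If there exists a choice of parameters for $g$ and $T_1,\dots,T_K$ such that $\mathcal{L}_{\text{cdcl}}<K\log K$, then for any nonzero $c\in\mathbb{R}^d$, the constant parameter setting in which $T_k(g(x))=g(x)=c$ for all inputs $x$ and all $k=1,\dots,K$ is not an optimal solution for minimizing $\mathcal{L}_{\text{cdcl}}$.
   Context: A multivariate time series $X\in\mathbb{R}^{N\times T}$ is given; $X_{\cdot,i}\in\mathbb{R}^N$ is its value at time $i$. The training set $\mathcal{D}$ consists of windows $X^t=\{X_{\cdot,i}\}_{i=t-w+1}^{t}$ extracted with stride 1, each split into a context sequence $C^t=\{X_{\cdot,i}\}_{i=t-w+1}^{t-p}$ and a suspect sequence $S^t=\{X_{\cdot,i}\}_{i=t-c}^{t}$ of equal length (here $p$ and the sequence length are hyperparameters). Set $O^t=g(S^t)$, $G^t=g(C^t)$, and $O^{t,k}=T_k(O^t)$ for $k=1,\dots,K$. For a temperature $\tau>0$ define $h(a,b)=\exp\!\big(\mathrm{sim}(a,b)/\tau\big)$, where $\mathrm{sim}(a,b)=\frac{a^\top b}{\|a\|_2\|b\|_2}$ is cosine similarity. The losses are $$\mathcal{L}_{\text{dcl}}=-\mathbb{E}_{X^t\sim\mathcal{D}}\sum_{k=1}^K\log\frac{h(O^t,O^{t,k})}{h(O^t,O^{t,k})+\sum_{l\neq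 k}h(O^{t,k},O^{t,l})},\qquad \mathcal{L}_{\text{cncl}}=\mathbb{E}_{X^t\sim\mathcal{D}}\sum_{k=1}^K\|O^{t,k}-G^t\|_2^2,$$ and $\mathcal{L}_{\text{cdcl}}=\mathcal{L}_{\text{cncl}}+\mathcal{L}_{\text{dcl}}$. *)

theory Defs
  imports "HOL-Analysis.Analysis"
begin

definition cos_sim :: "real^'d \<Rightarrow> real^'d \<Rightarrow> real" where
  "cos_sim a b = (a \<bullet> b) / (norm a * norm b)"

definition hsim :: "real \<Rightarrow> real^'d \<Rightarrow> real^'d \<Rightarrow> real" where
  "hsim \<tau> a b = exp (cos_sim a b / \<tau>)"

text \<open>Time series X : time index i (1..T) to R^N. Context sequence C^t = X_{t-w+1..t-p},
  suspect sequence S^t = X_{t-c..t}, both as lists of column vectors.\<close>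
definition context_seq :: "(nat \<Rightarrow> real^'N) \<Rightarrow> nat \<Rightarrow> nat \<Rightarrow> nat \<Rightarrow> (real^'N) list" where
  "context_seq X w p t = map X [t + 1 - w ..< t - p + 1]"

definition suspect_seq :: "(nat \<Rightarrow> real^'N) \<Rightarrow> nat \<Rightarrow> nat \<Rightarrow> (real^'N) list" where
  "suspect_seq X c t = map X [t - c ..< t + 1]"

text \<open>Window end times of the stride-1 training set: t = w, ..., T.\<close>
definition windows :: "nat \<Rightarrow> nat \<Rightarrow> nat set" where
  "windows w Tlen = {w..Tlen}"

definition dcl_window ::
  "real \<Rightarrow> nat \<Rightarrow> ((real^'N) list \<Rightarrow> real^'d) \<Rightarrow> (nat \<Rightarrow> real^'d \<Rightarrow> real^'d)
     \<Rightarrow> (real^'N) list \<Rightarrow> real" where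
  "dcl_window \<tau> K g T S =
     (let ov = g S in
      - (\<Sum>k=1..K. ln (hsim \<tau> ov (T k ov) /
            (hsim \<tau> ov (T k ov) + (\<Sum>l\<in>{1..K} - {k}. hsim \<tau> (T k ov) (T l ov))))))"

definition cncl_window ::
  "nat \<Rightarrow> ((real^'N) list \<Rightarrow> real^'d) \<Rightarrow> (nat \<Rightarrow> real^'d \<Rightarrow> real^'d)
     \<Rightarrow> (real^'N) list \<Rightarrow> (real^'N) list \<Rightarrow> real" where
  "cncl_window K g T S C = (\<Sum>k=1..K. (norm (T k (g S) - g C))\<^sup>2)"

text \<open>Expectation over the (uniform, finite) training set of windows.\<close>
definition L_dcl where
  "L_dcl \<tau> K X w p c Tlen g T =
     (\<Sum>t\<in>windows w Tlen. dcl_window \<tau> K g T (suspect_seq X c t)) / real (card (windows w Tlen))"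

definition L_cncl where
  "L_cncl K X w p c Tlen g T =
     (\<Sum>t\<in>windows w Tlen. cncl_window K g T (suspect_seq X c t) (context_seq X w p t))
       / real (card (windows w Tlen))"

definition L_cdcl where
  "L_cdcl \<tau> K X w p c Tlen g T = L_cncl K X w p c Tlen g T + L_dcl \<tau> K X w p c Tlen g T"

end

theory Submission
  imports Defs
begin

text \<open>If the encoder and all transformations collapse to one constant vector, every similarity
  in the discriminative loss takes the same value \<open>e\<close>, so each of its \<open>K\<close> terms is
  \<open>ln (e / (K e)) = - ln K\<close>, while the contextual loss vanishes. The collapsed solution
  therefore has loss exactly \<open>K ln K\<close>, which the assumed parameters beat.\<close>

lemma hsim_pos: "hsim \<tau> a b > 0"
  by (simp add: hsim_def)

lemma dcl_window_collapsed:
  assumes fixed: "\<forall>k\<in>{1..K}. T k (g S) = g S"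
  shows "dcl_window \<tau> K g T S = real K * ln (real K)"
proof -
  define a where "a = g S"
  define e where "e = hsim \<tau> a a"
  have "e > 0"
    by (simp add: e_def hsim_pos)
  have term_eq: "ln (hsim \<tau> a (T k a) /
                   (hsim \<tau> a (T k a) + (\<Sum>l\<in>{1..K} - {k}. hsim \<tau> (T k a) (T l a))))
                 = - ln (real K)" if k: "k \<in> {1..K}" for k
  proof -
    have "(\<Sum>l\<in>{1..K} - {k}. hsim \<tau> (T k a) (T l a)) = real (K - 1) * e"
      using fixed k by (simp add: a_def e_def)
    moreover have "e + real (K - 1) * e = real K * e"
      using k by (simp add: of_nat_diff algebra_simps)
    ultimately show ?thesis
      using fixed k \<open>e > 0\<close> by (simp add: a_def e_def ln_div)
  qed
  have "dcl_window \<tau> K g T S = - (\<Sum>k=1..K. - ln (real K))"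
    unfolding dcl_window_def Let_def a_def[symmetric]
    by (intro arg_cong[where f = uminus] sum.cong refl term_eq)
  then show ?thesis
    by simp
qed

lemma cncl_window_collapsed:
  assumes "\<forall>k\<in>{1..K}. T k (g S) = g C"
  shows "cncl_window K g T S C = 0"
  using assms by (simp add: cncl_window_def)

lemma L_cdcl_constant_encoder:
  assumes "w \<le> Tlen"
    and g_const: "\<forall>x. g x = v"
    and T_fixes: "\<forall>k\<in>{1..K}. T k v = v"
  shows "L_cdcl \<tau> K X w p c Tlen g T = real K * ln (real K)"
proof -
  have "card (windows w Tlen) > 0"
    using assms(1) by (simp add: windows_def)
  moreover have "dcl_window \<tau> K g T S = real K * ln (real K)" for S
    using T_fixes g_const by (intro dcl_window_collapsed) simp
  moreover have "cncl_window K g T S C = 0" for S C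
    using T_fixes g_const by (intro cncl_window_collapsed) simp
  ultimately show ?thesis
    by (simp add: L_cdcl_def L_cncl_def L_dcl_def)
qed

theorem proposition2:
  fixes X :: "nat \<Rightarrow> real^'N"
    and Tlen w p c K :: nat
    and \<tau> :: real
    and \<Theta> :: "'q set"
    and enc :: "'q \<Rightarrow> (real^'N) list \<Rightarrow> real^'d"
    and trans :: "'q \<Rightarrow> nat \<Rightarrow> real^'d \<Rightarrow> real^'d"
    and \<theta>0 :: 'q
    and v :: "real^'d"
  assumes tau: "\<tau> > 0"
    and hyp: "1 \<le> w" "p < w" "w \<le> Tlen" "w - p = c + 1"
    and ex_good: "\<exists>\<theta>\<in>\<Theta>. L_cdcl \<tau> K X w p c Tlen (enc \<theta>) (trans \<theta>) < real K * ln (real K)"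
    and v_nz: "v \<noteq> 0"
    and th0: "\<theta>0 \<in> \<Theta>"
    and const_g: "\<forall>x. enc \<theta>0 x = v"
    and const_T: "\<forall>k\<in>{1..K}. \<forall>x. trans \<theta>0 k (enc \<theta>0 x) = v"
  shows "\<not> (\<forall>\<theta>\<in>\<Theta>. L_cdcl \<tau> K X w p c Tlen (enc \<theta>0) (trans \<theta>0)
                      \<le> L_cdcl \<tau> K X w p c Tlen (enc \<theta>) (trans \<theta>))"
proof -
  have "\<forall>k\<in>{1..K}. trans \<theta>0 k v = v"
    using const_T const_g by metis
  with hyp(3) const_g
  have "L_cdcl \<tau> K X w p c Tlen (enc \<theta>0) (trans \<theta>0) = real K * ln (real K)"
    by (rule L_cdcl_constant_encoder)
  with ex_good show ?thesis
    by fastforce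
qed

end
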